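(* Let $\|\cdot\|$ be a URTC-norm on $\mathbb{R}^2$, let $d>0$, and let $b_1,b_2\in\mathbb{R}^2$ with $\|b_1\|=\|b_2\|=\|b_1-b_2\|=d$. Then the triple $(0,b_1,b_2)$ can be extended to a $d$-probe $(0,b_1,b_2,b_3,c_1,c_2,c_3)$, and in every such $d$-probe necessarily $b_3=b_1+b_2$. Moreover, $b_1+b_2\neq 0$.
   Context: A norm $\|\cdot\|$ on $\mathbb{R}^2$ is called a URTC-norm if for every $a,b\in\mathbb{R}^2$ with $\|a-b\|=1$ the system $\|a-x\|=1$, $\|b-x\|=1$ is satisfied by exactly two points $x\in\mathbb{R}^2$. For $d>0$, a 7-tuple $(a,b_1,b_2,b_3,c_1,c_2,c_3)$ of points of $\mathbb{R}^2$ is a $d$-probe if $d=\|a-b_1\|=\|a-b_2\|=\|b_1-b_2\|=\|b_1-b_3\|=\|b_2-b_3\|=\|a-c_1\|=\|a-c_2\|=\|c_1-c_2\|=\|c_1-c_3\|=\|c_2-c_3\|=\|b_3-c_3\|$. *)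

theory Defs
  imports "HOL-Analysis.Analysis"
begin

definition is_norm :: "(real^2 \<Rightarrow> real) \<Rightarrow> bool" where
  "is_norm N \<longleftrightarrow>
     (\<forall>x. N x = 0 \<longleftrightarrow> x = 0) \<and>
     (\<forall>c x. N (c *\<^sub>R x) = \<bar>c\<bar> * N x) \<and>
     (\<forall>x y. N (x + y) \<le> N x + N y)"

definition URTC_norm :: "(real^2 \<Rightarrow> real) \<Rightarrow> bool" where
  "URTC_norm N \<longleftrightarrow> is_norm N \<and>
     (\<forall>a b. N (a - b) = 1 \<longrightarrow> card {x. N (a - x) = 1 \<and> N (b - x) = 1} = 2)"

definition probe :: "(real^2 \<Rightarrow> real) \<Rightarrow> real \<Rightarrow> real^2 \<Rightarrow> real^2 \<Rightarrow> real^2 \<Rightarrow> real^2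
                      \<Rightarrow> real^2 \<Rightarrow> real^2 \<Rightarrow> real^2 \<Rightarrow> bool" where
  "probe N d a b1 b2 b3 c1 c2 c3 \<longleftrightarrow>
     d = N (a - b1) \<and> d = N (a - b2) \<and> d = N (b1 - b2) \<and> d = N (b1 - b3) \<and>
     d = N (b2 - b3) \<and> d = N (a - c1) \<and> d = N (a - c2) \<and> d = N (c1 - c2) \<and>
     d = N (c1 - c3) \<and> d = N (c2 - c3) \<and> d = N (b3 - c3)"

end

theory Submission
  imports Defs
begin

text \<open>For a URTC-norm, two circles of radius \<open>d\<close> whose centres \<open>a, b\<close> are at distance \<open>d\<close> meet
  in exactly two points, which the point reflection \<open>z \<mapsto> a + b - z\<close> exchanges. Hence in a
  \<open>d\<close>-probe on \<open>0, b1, b2\<close> we have \<open>b3 \<in> {0, b1 + b2}\<close>. If \<open>b3 = 0\<close>, the same argument gives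
  \<open>c3 = c1 + c2\<close> with \<open>N (c1 + c2) = d\<close>, so \<open>c1 + c2\<close> would be a common point of the circles
  about \<open>0\<close> and \<open>c1\<close>; but these are \<open>c2\<close> and \<open>c1 - c2\<close>.

  For existence, let \<open>c\<close> run along the circle about \<open>0\<close> from \<open>b1\<close> to \<open>-b1\<close> and let \<open>c'\<close> be the
  apex of the equilateral triangle \<open>0 c c'\<close> oriented like \<open>0 b1 b2\<close>; by the closed graph theorem
  \<open>c'\<close> depends continuously on \<open>c\<close>. The distance \<open>N (b1 + b2 - (c + c'))\<close> moves from \<open>0\<close> to
  \<open>2 N (b1 + b2) \<ge> 2 d\<close>, so it equals \<open>d\<close> somewhere, and \<open>b3 = b1 + b2\<close>, \<open>c3 = c + c'\<close>
  complete the probe.\<close>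

subsection \<open>Norms on the plane\<close>

lemma is_norm_eq_0_iff: "is_norm N \<Longrightarrow> N x = 0 \<longleftrightarrow> x = 0"
  and is_norm_scaleR: "is_norm N \<Longrightarrow> N (c *\<^sub>R x) = \<bar>c\<bar> * N x"
  and is_norm_triangle: "is_norm N \<Longrightarrow> N (x + y) \<le> N x + N y"
  unfolding is_norm_def by auto

lemma is_norm_zero: "is_norm N \<Longrightarrow> N 0 = 0"
  by (simp add: is_norm_eq_0_iff)

lemma is_norm_minus: "is_norm N \<Longrightarrow> N (- x) = N x"
  using is_norm_scaleR[of N "-1" x] by simp

lemma is_norm_minus_commute: "is_norm N \<Longrightarrow> N (x - y) = N (y - x)"
  using is_norm_minus[of N "x - y"] by simp

lemma is_norm_ge_zero: "is_norm N \<Longrightarrow> N x \<ge> 0"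
  using is_norm_triangle[of N x "- x"] is_norm_minus[of N x] is_norm_zero[of N] by simp

lemma is_norm_gt_zero: "is_norm N \<Longrightarrow> x \<noteq> 0 \<Longrightarrow> N x > 0"
  using is_norm_ge_zero[of N x] is_norm_eq_0_iff[of N x] by linarith

lemma is_norm_le_norm:
  assumes "is_norm N"
  shows "N x \<le> (N (axis 1 1) + N (axis 2 1)) * norm (x :: real^2)"
proof -
  have "x = x$1 *\<^sub>R axis 1 1 + x$2 *\<^sub>R axis 2 1"
    by (simp add: vec_eq_iff forall_2 axis_def)
  then have "N x \<le> N (x$1 *\<^sub>R axis 1 1) + N (x$2 *\<^sub>R axis 2 1)"
    using is_norm_triangle[OF assms] by metis
  also have "\<dots> = \<bar>x$1\<bar> * N (axis 1 1) + \<bar>x$2\<bar> * N (axis 2 1)"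
    by (simp add: is_norm_scaleR[OF assms])
  also have "\<dots> \<le> norm x * N (axis 1 1) + norm x * N (axis 2 1)"
    by (intro add_mono mult_right_mono component_le_norm_cart is_norm_ge_zero[OF assms])
  finally show ?thesis
    by (simp add: algebra_simps)
qed

lemma is_norm_lipschitz:
  assumes "is_norm N"
  shows "(N (axis 1 1) + N (axis 2 1))-lipschitz_on UNIV N"
proof (rule lipschitz_onI)
  fix x y :: "real^2"
  have "N x \<le> N (x - y) + N y" "N y \<le> N (y - x) + N x"
    using is_norm_triangle[OF assms, of "x - y" y] is_norm_triangle[OF assms, of "y - x" x] by simp_all
  then show "dist (N x) (N y) \<le> (N (axis 1 1) + N (axis 2 1)) * dist x y"
    using is_norm_le_norm[OF assms, of "x - y"] is_norm_le_norm[OF assms, of "y - x"]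
    by (simp add: dist_real_def dist_norm norm_minus_commute)
qed (use is_norm_ge_zero[OF assms] in simp)

lemma is_norm_continuous_on: "is_norm N \<Longrightarrow> continuous_on S N"
  by (metis continuous_on_subset is_norm_lipschitz lipschitz_on_continuous_on subset_UNIV)

lemma continuous_on_is_norm_comp:
  "is_norm N \<Longrightarrow> continuous_on S f \<Longrightarrow> continuous_on S (\<lambda>x. N (f x))"
  using continuous_on_compose2[OF is_norm_continuous_on] by blast

lemma is_norm_ge_norm:
  assumes "is_norm N"
  obtains m where "m > 0" "\<And>x :: real^2. m * norm x \<le> N x"
proof -
  obtain z where z: "z \<in> sphere (0 :: real^2) 1" "\<And>y. y \<in> sphere 0 1 \<Longrightarrow> N z \<le> N y"
    using continuous_attains_inf[of "sphere (0 :: real^2) 1" N] is_norm_continuous_on[OF assms]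
    by fastforce
  have "N z * norm x \<le> N x" for x :: "real^2"
  proof (cases "x = 0")
    case False
    then have "N z \<le> N (inverse (norm x) *\<^sub>R x)"
      using z(2)[of "inverse (norm x) *\<^sub>R x"] by simp
    with False show ?thesis
      by (simp add: is_norm_scaleR[OF assms] field_simps)
  qed (simp add: is_norm_zero[OF assms])
  moreover have "z \<noteq> 0"
    using z(1) by auto
  then have "N z > 0"
    by (rule is_norm_gt_zero[OF assms])
  ultimately show thesis
    using that by blast
qed

definition det2 :: "real^2 \<Rightarrow> real^2 \<Rightarrow> real" where
  "det2 x y = x$1 * y$2 - x$2 * y$1"

lemma det2_eq_0_imp_collinear:
  assumes "det2 x y = 0" "x \<noteq> 0"
  obtains l where "y = l *\<^sub>R x"
proof (cases "x$1 = 0")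
  case False
  with assms(1) have "y = (y$1 / x$1) *\<^sub>R x"
    unfolding det2_def by (simp add: vec_eq_iff forall_2 field_simps)
  then show thesis by (rule that)
next
  case True
  with assms(2) have "x$2 \<noteq> 0"
    by (auto simp: vec_eq_iff forall_2)
  with True assms(1) have "y = (y$2 / x$2) *\<^sub>R x"
    unfolding det2_def by (simp add: vec_eq_iff forall_2 field_simps)
  then show thesis by (rule that)
qed

lemma equilateral_det2_neq_0:
  assumes "is_norm N" "d > 0" "N x = d" "N y = d" "N (x - y) = d"
  shows "det2 x y \<noteq> 0"
proof
  assume "det2 x y = 0"
  moreover have "x \<noteq> 0"
    using assms is_norm_zero[OF assms(1)] by auto
  ultimately obtain l where l: "y = l *\<^sub>R x"
    by (rule det2_eq_0_imp_collinear)
  moreover have "x - y = (1 - l) *\<^sub>R x"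
    using l by (simp add: algebra_simps)
  ultimately have "\<bar>l\<bar> * d = d" "\<bar>1 - l\<bar> * d = d"
    using assms(3-5) is_norm_scaleR[OF assms(1)] by metis+
  then have "\<bar>l\<bar> = 1" "\<bar>1 - l\<bar> = 1"
    using assms(2) by simp_all
  then show False
    by linarith
qed

lemma equilateral_norm_add_ge:
  assumes "is_norm N" "N x = d" "N (x - y) = d"
  shows "d \<le> N (x + y)"
proof -
  have "(x + y) + (x - y) = 2 *\<^sub>R x"
    by (simp add: scaleR_2)
  then have "2 * d = N ((x + y) + (x - y))"
    using assms(2) is_norm_scaleR[OF assms(1), of 2 x] by simp
  also have "\<dots> \<le> N (x + y) + d"
    using is_norm_triangle[OF assms(1), of "x + y" "x - y"] assms(3) by linarith
  finally show ?thesis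
    by simp
qed

subsection \<open>Intersections of two circles\<close>

lemma URTC_norm_is_norm: "URTC_norm N \<Longrightarrow> is_norm N"
  unfolding URTC_norm_def by simp

lemma URTC_circle_intersection_card:
  assumes "URTC_norm N" "d > 0" "N (a - b) = d"
  shows "card {z. N (a - z) = d \<and> N (b - z) = d} = 2"
proof -
  have N: "is_norm N"
    using assms(1) by (rule URTC_norm_is_norm)
  have scale: "N (inverse d *\<^sub>R u - inverse d *\<^sub>R v) = N (u - v) / d" for u v
    using is_norm_scaleR[OF N, of "inverse d" "u - v"] assms(2)
    by (simp add: scaleR_diff_right divide_inverse_commute)
  let ?A = "{x. N (inverse d *\<^sub>R a - x) = 1 \<and> N (inverse d *\<^sub>R b - x) = 1}"
  have "N (inverse d *\<^sub>R a - inverse d *\<^sub>R b) = 1"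
    using scale[of a b] assms(2,3) by simp
  then have "card ?A = 2"
    using assms(1) unfolding URTC_norm_def by blast
  moreover have "{z. N (a - z) = d \<and> N (b - z) = d} = (\<lambda>p. d *\<^sub>R p) ` ?A"
  proof (intro set_eqI iffI)
    fix z assume "z \<in> {z. N (a - z) = d \<and> N (b - z) = d}"
    then have "inverse d *\<^sub>R z \<in> ?A" and "z = d *\<^sub>R (inverse d *\<^sub>R z)"
      using scale[of a z] scale[of b z] assms(2) by simp_all
    then show "z \<in> (\<lambda>p. d *\<^sub>R p) ` ?A"
      by blast
  next
    fix z assume "z \<in> (\<lambda>p. d *\<^sub>R p) ` ?A"
    then obtain p where "p \<in> ?A" "p = inverse d *\<^sub>R z"
      using assms(2) by auto
    then show "z \<in> {z. N (a - z) = d \<and> N (b - z) = d}"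
      using scale[of a z] scale[of b z] assms(2) by simp
  qed
  moreover have "card ((\<lambda>p. d *\<^sub>R p) ` ?A) = card ?A"
    by (rule card_image) (use assms(2) in \<open>simp add: inj_on_def\<close>)
  ultimately show ?thesis
    by simp
qed

lemma URTC_circle_intersection:
  assumes "URTC_norm N" "d > 0" "N (a - b) = d" "N (a - y) = d" "N (b - y) = d"
  shows "{z. N (a - z) = d \<and> N (b - z) = d} = {y, a + b - y}"
proof -
  have N: "is_norm N"
    using assms(1) by (rule URTC_norm_is_norm)
  define S where "S = {z. N (a - z) = d \<and> N (b - z) = d}"
  have "a - (a + b - y) = y - b" "b - (a + b - y) = y - a"
    by (simp_all add: algebra_simps)
  then have "y \<in> S" "a + b - y \<in> S"
    using assms(4,5) is_norm_minus_commute[OF N, of y] unfolding S_def by simp_all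
  moreover have "y \<noteq> a + b - y"
  proof
    assume "y = a + b - y"
    then have "a - y = (1/2) *\<^sub>R (a - b)"
      by (simp add: algebra_simps vec_eq_iff)
    then have "N (a - y) = d / 2"
      using is_norm_scaleR[OF N, of "1/2" "a - b"] assms(3) by simp
    with assms(2,4) show False
      by simp
  qed
  moreover obtain p q where "S = {p, q}"
    using URTC_circle_intersection_card[OF assms(1-3)] unfolding S_def[symmetric]
    by (meson card_2_iff)
  ultimately show ?thesis
    unfolding S_def[symmetric] by blast
qed

lemma URTC_circle_intersection_nonempty:
  assumes "URTC_norm N" "d > 0" "N (a - b) = d"
  obtains y where "N (a - y) = d" "N (b - y) = d"
proof -
  have "{z. N (a - z) = d \<and> N (b - z) = d} \<noteq> {}"
    using URTC_circle_intersection_card[OF assms] by (intro notI) simp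
  then show thesis
    using that by blast
qed

lemma URTC_equilateral_norm_add_neq:
  assumes "URTC_norm N" "d > 0" "N x = d" "N y = d" "N (x - y) = d"
  shows "N (x + y) \<noteq> d"
proof
  assume "N (x + y) = d"
  have N: "is_norm N"
    using assms(1) by (rule URTC_norm_is_norm)
  have "N (0 - x) = d" "N (0 - y) = d" "N (0 - (x + y)) = d" "N (x - (x + y)) = d"
    using assms(3,4) \<open>N (x + y) = d\<close> is_norm_minus[OF N] by (simp_all only: diff_0) simp_all
  then have "x + y \<in> {y, 0 + x - y}"
    using URTC_circle_intersection[OF assms(1,2) \<open>N (0 - x) = d\<close> \<open>N (0 - y) = d\<close> assms(5)]
    by blast
  then have "x + y = y \<or> x + y = x - y"
    by simp
  then have "x = 0 \<or> y = 0"
    by (auto simp: vec_eq_iff)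
  then show False
    using assms(2-4) is_norm_zero[OF N] by auto
qed

subsection \<open>The apex of an equilateral triangle\<close>

text \<open>For \<open>N x = d\<close> the two points at distance \<open>d\<close> from \<open>0\<close> and \<open>x\<close> are \<open>y\<close> and \<open>x - y\<close>, which
  lie on opposite sides of the line through \<open>0\<close> and \<open>x\<close>; the sign \<open>\<sigma>\<close> selects one of them.\<close>

definition apex :: "(real^2 \<Rightarrow> real) \<Rightarrow> real \<Rightarrow> real \<Rightarrow> real^2 \<Rightarrow> real^2" where
  "apex N d \<sigma> x = (THE y. N y = d \<and> N (x - y) = d \<and> 0 < \<sigma> * det2 x y)"

lemma apex_unique:
  assumes "URTC_norm N" "d > 0" "\<sigma> \<noteq> 0" "N x = d"
  shows "\<exists>!y. N y = d \<and> N (x - y) = d \<and> 0 < \<sigma> * det2 x y"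
proof -
  have N: "is_norm N"
    using assms(1) by (rule URTC_norm_is_norm)
  have "N (x - 0) = d"
    using assms(4) by simp
  then obtain y where y: "N (x - y) = d" "N (0 - y) = d"
    by (rule URTC_circle_intersection_nonempty[OF assms(1,2)])
  have circle: "N z = d \<and> N (x - z) = d \<longleftrightarrow> z = y \<or> z = x - y" for z
  proof -
    have "N z = d \<and> N (x - z) = d \<longleftrightarrow> z \<in> {z. N (x - z) = d \<and> N (0 - z) = d}"
      using is_norm_minus[OF N, of z] by auto
    also have "\<dots> \<longleftrightarrow> z \<in> {y, x + 0 - y}"
      by (simp only: URTC_circle_intersection[OF assms(1,2) \<open>N (x - 0) = d\<close> y])
    finally show ?thesis
      by simp
  qed
  have "det2 x y \<noteq> 0"
    using equilateral_det2_neq_0[OF N assms(2,4)] y is_norm_minus[OF N, of y] by simp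
  then have "\<sigma> * det2 x y \<noteq> 0"
    using assms(3) by simp
  moreover have "\<sigma> * det2 x (x - y) = - (\<sigma> * det2 x y)"
    by (simp add: det2_def algebra_simps)
  ultimately have "0 < \<sigma> * det2 x y \<longleftrightarrow> \<not> 0 < \<sigma> * det2 x (x - y)"
    by linarith
  then show ?thesis
    unfolding conj_assoc[symmetric] circle by blast
qed

lemma apex_spec:
  assumes "URTC_norm N" "d > 0" "\<sigma> \<noteq> 0" "N x = d"
  shows "N (apex N d \<sigma> x) = d" "N (x - apex N d \<sigma> x) = d" "0 < \<sigma> * det2 x (apex N d \<sigma> x)"
  using theI'[OF apex_unique[OF assms]] unfolding apex_def by simp_all

lemma apex_eq:
  assumes "URTC_norm N" "d > 0" "\<sigma> \<noteq> 0" "N x = d"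
    and "N y = d" "N (x - y) = d" "0 < \<sigma> * det2 x y"
  shows "apex N d \<sigma> x = y"
  unfolding apex_def using the1_equality[OF apex_unique[OF assms(1-4)]] assms(5-7) by blast

text \<open>In the graph \<open>G\<close> the orientation condition may be taken non-strict, which makes \<open>G\<close>
  closed, because \<open>det2\<close> does not vanish on equilateral triangles.\<close>

lemma apex_continuous_on:
  assumes "URTC_norm N" "d > 0" "\<sigma> \<noteq> 0"
  shows "continuous_on {x. N x = d} (apex N d \<sigma>)"
proof -
  have N: "is_norm N"
    using assms(1) by (rule URTC_norm_is_norm)
  obtain m where m: "m > 0" "\<And>x :: real^2. m * norm x \<le> N x"
    using is_norm_ge_norm[OF N] by blast
  define G where "G = {p. N (fst p) = d \<and> N (snd p) = d \<and> N (fst p - snd p) = d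
    \<and> 0 \<le> \<sigma> * det2 (fst p) (snd p)}"
  have "(\<lambda>x. (x, apex N d \<sigma> x)) ` {x. N x = d} = G"
  proof
    show "(\<lambda>x. (x, apex N d \<sigma> x)) ` {x. N x = d} \<subseteq> G"
    proof (rule image_subsetI)
      fix x assume "x \<in> {x. N x = d}"
      then have "N x = d"
        by simp
      then show "(x, apex N d \<sigma> x) \<in> G"
        unfolding G_def using apex_spec[OF assms \<open>N x = d\<close>] by (simp add: less_imp_le)
    qed
    show "G \<subseteq> (\<lambda>x. (x, apex N d \<sigma> x)) ` {x. N x = d}"
    proof
      fix p assume "p \<in> G"
      obtain x y where "p = (x, y)"
        by (cases p)
      with \<open>p \<in> G\<close> have p: "p = (x, y)" "N x = d" "N y = d" "N (x - y) = d"
        "0 \<le> \<sigma> * det2 x y"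
        unfolding G_def by simp_all
      have "det2 x y \<noteq> 0"
        by (rule equilateral_det2_neq_0[OF N assms(2) p(2-4)])
      with assms(3) p(5) have "0 < \<sigma> * det2 x y"
        by (simp add: order_le_less)
      then have "apex N d \<sigma> x = y"
        by (rule apex_eq[OF assms p(2-4)])
      with p(1,2) show "p \<in> (\<lambda>x. (x, apex N d \<sigma> x)) ` {x. N x = d}"
        by (intro image_eqI[of _ _ x]) simp_all
    qed
  qed
  moreover have "closed G"
  proof -
    have norms: "continuous_on UNIV (\<lambda>p :: (real^2) \<times> (real^2). N (fst p))"
      "continuous_on UNIV (\<lambda>p :: (real^2) \<times> (real^2). N (snd p))"
      "continuous_on UNIV (\<lambda>p :: (real^2) \<times> (real^2). N (fst p - snd p))"
      by (intro continuous_on_is_norm_comp[OF N] continuous_intros)+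
    have orientation: "continuous_on UNIV (\<lambda>p :: (real^2) \<times> (real^2). \<sigma> * det2 (fst p) (snd p))"
      unfolding det2_def by (intro continuous_intros)
    show ?thesis
      unfolding G_def
      by (intro closed_Collect_conj closed_Collect_eq closed_Collect_le continuous_on_const
          norms orientation)
  qed
  moreover have "apex N d \<sigma> \<in> {x. N x = d} \<rightarrow> cball 0 (d / m)"
  proof
    fix x assume "x \<in> {x. N x = d}"
    then have "N (apex N d \<sigma> x) = d"
      by (simp add: apex_spec(1)[OF assms])
    then have "m * norm (apex N d \<sigma> x) \<le> d"
      using m(2)[of "apex N d \<sigma> x"] by simp
    then show "apex N d \<sigma> x \<in> cball 0 (d / m)"
      using m(1) by (simp add: field_simps)
  qed
  ultimately show ?thesis
    using continuous_from_closed_graph[of "cball 0 (d / m)" "apex N d \<sigma>" "{x. N x = d}"] by simp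
qed

subsection \<open>Probes\<close>

lemma circle_path_to_antipode:
  assumes "is_norm N" "det2 b1 b2 \<noteq> 0"
  obtains c :: "real \<Rightarrow> real^2"
  where "continuous_on {0..1} c" "\<And>t. N (c t) = N b1" "c 0 = b1" "c 1 = - b1"
proof -
  define v where "v t = cos (pi * t) *\<^sub>R b1 + sin (pi * t) *\<^sub>R b2" for t :: real
  have "v t \<noteq> 0" for t
  proof
    assume "v t = 0"
    then have "det2 b1 (v t) = 0" "det2 (v t) b2 = 0"
      by (simp_all add: det2_def)
    moreover have "det2 b1 (v t) = sin (pi * t) * det2 b1 b2" "det2 (v t) b2 = cos (pi * t) * det2 b1 b2"
      unfolding v_def det2_def by (simp_all add: algebra_simps)
    ultimately show False
      using assms(2) sin_cos_squared_add[of "pi * t"] by simp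
  qed
  then have pos: "N (v t) > 0" for t
    by (rule is_norm_gt_zero[OF assms(1)])
  have "b1 \<noteq> 0"
    using assms(2) by (auto simp: det2_def)
  define c where "c t = (N b1 / N (v t)) *\<^sub>R v t" for t
  show thesis
  proof (rule that)
    show "continuous_on {0..1} c"
      unfolding c_def v_def using pos[unfolded v_def]
      by (intro continuous_intros continuous_on_is_norm_comp[OF assms(1)]) (metis less_irrefl)
    show "N (c t) = N b1" for t
      using pos[of t] is_norm_ge_zero[OF assms(1), of b1]
      unfolding c_def by (simp add: is_norm_scaleR[OF assms(1)])
    show "c 0 = b1" "c 1 = - b1"
      using is_norm_gt_zero[OF assms(1) \<open>b1 \<noteq> 0\<close>] is_norm_minus[OF assms(1), of b1]
      unfolding c_def v_def by simp_all
  qed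
qed

lemma equilateral_pair_at_distance:
  assumes "URTC_norm N" "d > 0" "N b1 = d" "N b2 = d" "N (b1 - b2) = d"
  obtains c1 c2 where "N c1 = d" "N c2 = d" "N (c1 - c2) = d" "N (b1 + b2 - (c1 + c2)) = d"
proof -
  have N: "is_norm N"
    using assms(1) by (rule URTC_norm_is_norm)
  define \<sigma> where "\<sigma> = det2 b1 b2"
  have "\<sigma> \<noteq> 0"
    unfolding \<sigma>_def by (rule equilateral_det2_neq_0[OF N assms(2-5)])
  obtain c :: "real \<Rightarrow> real^2" where c: "continuous_on {0..1} c" "\<And>t. N (c t) = N b1" "c 0 = b1" "c 1 = - b1"
    using circle_path_to_antipode[OF N \<open>\<sigma> \<noteq> 0\<close>[unfolded \<sigma>_def]] by blast
  have c_norm: "N (c t) = d" for t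
    using c(2) assms(3) by simp
  define \<psi> where "\<psi> t = N (b1 + b2 - (c t + apex N d \<sigma> (c t)))" for t :: real
  have "continuous_on {0..1} (\<lambda>t. apex N d \<sigma> (c t))"
    using continuous_on_compose2[OF apex_continuous_on[OF assms(1,2) \<open>\<sigma> \<noteq> 0\<close>] c(1)] c_norm by blast
  then have \<psi>_cont: "continuous_on {0..1} \<psi>"
    unfolding \<psi>_def by (intro continuous_on_is_norm_comp[OF N] continuous_intros c(1))
  have "det2 (- b1) (- b2) = \<sigma>"
    by (simp add: \<sigma>_def det2_def)
  moreover have "0 < \<sigma> * \<sigma>"
    using \<open>\<sigma> \<noteq> 0\<close> not_real_square_gt_zero by blast
  ultimately have orient: "0 < \<sigma> * det2 b1 b2" "0 < \<sigma> * det2 (- b1) (- b2)"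
    unfolding \<sigma>_def by simp_all
  have antipodes: "N (- b1) = d" "N (- b2) = d" "N (- b1 - - b2) = d"
    using assms(3-5) is_norm_minus[OF N] is_norm_minus_commute[OF N, of b1 b2] by simp_all
  have "apex N d \<sigma> b1 = b2"
    by (rule apex_eq[OF assms(1,2) \<open>\<sigma> \<noteq> 0\<close> assms(3-5) orient(1)])
  moreover have "apex N d \<sigma> (- b1) = - b2"
    by (rule apex_eq[OF assms(1,2) \<open>\<sigma> \<noteq> 0\<close> antipodes orient(2)])
  moreover have "b1 + b2 - (- b1 + - b2) = 2 *\<^sub>R (b1 + b2)"
    by (simp add: scaleR_2)
  ultimately have "\<psi> 0 = 0" "\<psi> 1 = 2 * N (b1 + b2)"
    unfolding \<psi>_def c(3,4) by (simp_all add: is_norm_zero[OF N] is_norm_scaleR[OF N])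
  moreover have "d \<le> N (b1 + b2)"
    by (rule equilateral_norm_add_ge[OF N assms(3,5)])
  ultimately have "\<exists>t. 0 \<le> t \<and> t \<le> 1 \<and> \<psi> t = d"
    using assms(2) by (intro IVT' \<psi>_cont) simp_all
  then obtain t where "\<psi> t = d"
    by blast
  then show thesis
    using that[of "c t" "apex N d \<sigma> (c t)"] c_norm apex_spec[OF assms(1,2) \<open>\<sigma> \<noteq> 0\<close> c_norm] unfolding \<psi>_def by simp
qed

lemma probe_third_vertex:
  assumes "URTC_norm N" "d > 0" "N b1 = d" "N b2 = d" "N (b1 - b2) = d"
    and "probe N d 0 b1 b2 b3 c1 c2 c3"
  shows "b3 = b1 + b2"
proof -
  have N: "is_norm N"
    using assms(1) by (rule URTC_norm_is_norm)
  have origin: "N (u - 0) = d \<longleftrightarrow> N (0 - u) = d" for u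
    using is_norm_minus[OF N, of u] by simp
  have c: "N (c1 - 0) = d" "N (c2 - 0) = d" "N (c1 - c2) = d" "N (c1 - c3) = d" "N (c2 - c3) = d"
    and b3: "N (b1 - b3) = d" "N (b2 - b3) = d" "N (b3 - c3) = d"
    using assms(6) unfolding probe_def origin by simp_all
  have "N (b1 - 0) = d" "N (b2 - 0) = d"
    using assms(3,4) by simp_all
  then have "b3 \<in> {0, b1 + b2 - 0}"
    using URTC_circle_intersection[OF assms(1,2,5)] b3(1,2) by blast
  moreover have "b3 \<noteq> 0"
  proof
    assume "b3 = 0"
    with b3(3) have "N (c3 - 0) = d"
      using is_norm_minus[OF N, of c3] by simp
    then have "c3 \<noteq> 0"
      using assms(2) is_norm_zero[OF N] by auto
    moreover have "c3 \<in> {0, c1 + c2 - 0}"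
      using URTC_circle_intersection[OF assms(1,2) c(3,1,2)] c(4,5) by blast
    ultimately have "N (c1 + c2) = d"
      using \<open>N (c3 - 0) = d\<close> by simp
    then show False
      using URTC_equilateral_norm_add_neq[OF assms(1,2)] c(1-3) by simp
  qed
  ultimately show ?thesis
    by simp
qed

theorem lemma4:
  fixes N :: "real^2 \<Rightarrow> real" and d :: real and b1 b2 :: "real^2"
  assumes "URTC_norm N" and "d > 0"
    and "N b1 = d" and "N b2 = d" and "N (b1 - b2) = d"
  shows "(\<exists>b3 c1 c2 c3. probe N d 0 b1 b2 b3 c1 c2 c3)
       \<and> (\<forall>b3 c1 c2 c3. probe N d 0 b1 b2 b3 c1 c2 c3 \<longrightarrow> b3 = b1 + b2)
       \<and> b1 + b2 \<noteq> 0"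
proof (intro conjI allI impI)
  have N: "is_norm N"
    using assms(1) by (rule URTC_norm_is_norm)
  obtain c1 c2 where c: "N c1 = d" "N c2 = d" "N (c1 - c2) = d" "N (b1 + b2 - (c1 + c2)) = d"
    using equilateral_pair_at_distance[OF assms] .
  then have "probe N d 0 b1 b2 (b1 + b2) c1 c2 (c1 + c2)"
    using assms(3-5) unfolding probe_def by (simp add: is_norm_minus[OF N])
  then show "\<exists>b3 c1 c2 c3. probe N d 0 b1 b2 b3 c1 c2 c3"
    by blast
  show "b3 = b1 + b2" if "probe N d 0 b1 b2 b3 c1 c2 c3" for b3 c1 c2 c3
    using probe_third_vertex[OF assms that] .
  have "N (b1 + b2) > 0"
    using equilateral_norm_add_ge[OF N assms(3,5)] assms(2) by linarith
  then show "b1 + b2 \<noteq> 0"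
    using is_norm_zero[OF N] by auto
qed

end
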